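(* Let $f_1,\dots,f_n,g\in\mathbb K[x,\bar y_0,\bar y]$ and $\bar r_0=(r_{01},\dots,r_{0n})\in\mathbb K^n$ with $g(0,\bar r_0,\bar r_0)\neq 0$. Let $w$ be a new variable and let $h(x,\bar y_0,\bar y,w)$ be the polynomial obtained from the syntactic stream derivative $g'=g'(x,\bar y_0,\bar y,\bar y')$ by replacing each variable $y_i'$ with the polynomial $f_i(x,\bar y_0,\bar y)\cdot w$, $i=1,\dots,n$. Let $\bar\sigma=(\sigma_1,\dots,\sigma_n)\in\Sigma^n$ satisfy $$\sigma_i'=f_i(X,\bar r_0,\bar\sigma)\times g(X,\bar r_0,\bar\sigma)^{-1},\qquad \sigma_i(0)=r_{0i}\qquad(i=1,\dots,n).$$ Then, with $\tau:=g(X,\bar r_0,\bar\sigma)^{-1}$, the tuple $(\bar\sigma,\tau)$ is the unique solution of the polynomial initial value problem $$\sigma_i'=f_i(X,\bar r_0,\bar\sigma)\times\tau,\ \ \sigma_i(0)=r_{0i}\ (i=1,\dots,n);\qquad \tau'=-g(0,\bar r_0,\bar r_0)^{-1}\, h(X,\bar r_0,\bar\sigma,\tau)\times\tau,\ \ \tau(0)=g(0,\bar r_0,\bar r_0)^{-1}.$$ Conversely, for any $(\bar\sigma,\tau)\in\Sigma^{n+1}$ satisfying this polynomial initial value problem, $\bar\sigma$ satisfies the rational system displayed above.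
   Context: Streams $\Sigma=\mathbb K^\omega$ over a field $\mathbb K$ of characteristic $0$, with pointwise sum, convolution $(\sigma\times\tau)(i)=\sum_{j=0}^{i}\sigma(j)\tau(i-j)$, scalars $r$ identified with $(r,0,0,\dots)$, $X=(0,1,0,\dots)$, stream derivative $\sigma'(i)=\sigma(i+1)$. A stream $\sigma$ with $\sigma(0)\ne0$ has a unique convolution inverse $\sigma^{-1}$. Evaluation $q(X,\bar r_0,\bar\sigma,\dots)$ of a polynomial substitutes $x\mapsto X$, $y_{0i}\mapsto r_{0i}$ (constant stream), $y_i\mapsto\sigma_i$, $w\mapsto\tau$. The syntactic stream derivative: with $y_0:=x$, $y_{00}:=0$, total order $y_0<y_1<\dots<y_n$, and $\min(m)$ the least variable of a monomial $m\neq1$, define on monomials by induction on total degree $(1)'=0$, $(x)'=1$, $(y_i)'=y_i'$ ($1\le i\le n$), $(y_i m)'=y_i' m+y_{0i}(m)'$ when $m\ne1$ and $y_i=\min(y_im)$, and extend linearly; for $g\in\mathbb K[x,\bar y_0,\bar y]$ the $y_{0i}$ appearing in $g$ are treated as coefficients (constants), so $g'\in\mathbb K[x,\bar y_0,\bar y,\bar y']$. A solution of a polynomial stream differential equation system $y_i'=p_i$, $y_i(0)=r_i$ is a tuple of streams with $\sigma_i'=p_i(X,\bar\sigma)$ and $\sigma_i(0)=r_i$. *)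

theory Defs
  imports "HOL-Library.Poly_Mapping" "HOL-Computational_Algebra.Formal_Power_Series"
begin

text \<open>Streams K^omega are represented by formal power series: the i-th entry of a
stream s is s $ i; pointwise sum and convolution product are the ring operations of
'a fps; the scalar r is fps_const r; X is fps_X; convolution inverse is inverse.\<close>

definition sderiv :: "'a fps \<Rightarrow> 'a fps" where
  "sderiv s = Abs_fps (\<lambda>i. fps_nth s (i + 1))"

text \<open>Variables: x, y_{0i}, y_i, y_i' and the new variable w.\<close>
datatype var = Vx | Vy0 nat | Vy nat | Vyd nat | Vw

type_synonym 'a mpoly = "(var \<Rightarrow>\<^sub>0 nat) \<Rightarrow>\<^sub>0 'a"

definition PVar :: "var \<Rightarrow> 'a::comm_ring_1 mpoly" where
  "PVar v = Poly_Mapping.single (Poly_Mapping.single v 1) 1"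

definition PConst :: "'a::comm_ring_1 \<Rightarrow> 'a mpoly" where
  "PConst c = Poly_Mapping.single 0 c"

definition pvars :: "'a::zero mpoly \<Rightarrow> var set" where
  "pvars p = {v. \<exists>m\<in>Poly_Mapping.keys p. v \<in> Poly_Mapping.keys m}"

definition base_vars :: "nat \<Rightarrow> var set" where
  "base_vars n = {Vx} \<union> Vy0 ` {1..n} \<union> Vy ` {1..n}"

definition peval :: "('a::zero \<Rightarrow> 'b::comm_ring_1) \<Rightarrow> (var \<Rightarrow> 'b) \<Rightarrow> 'a mpoly \<Rightarrow> 'b" where
  "peval c \<rho> p = (\<Sum>m\<in>Poly_Mapping.keys p. c (Poly_Mapping.lookup p m) * (\<Prod>v\<in>Poly_Mapping.keys m. \<rho> v ^ Poly_Mapping.lookup m v))"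

definition sassign :: "(nat \<Rightarrow> 'a::comm_ring_1) \<Rightarrow> (nat \<Rightarrow> 'a fps) \<Rightarrow> 'a fps \<Rightarrow> var \<Rightarrow> 'a fps" where
  "sassign r0 \<sigma> \<tau> v = (case v of Vx \<Rightarrow> fps_X | Vy0 i \<Rightarrow> fps_const (r0 i) | Vy i \<Rightarrow> \<sigma> i
                         | Vyd i \<Rightarrow> 0 | Vw \<Rightarrow> \<tau>)"

definition seval :: "(nat \<Rightarrow> 'a::comm_ring_1) \<Rightarrow> (nat \<Rightarrow> 'a fps) \<Rightarrow> 'a fps \<Rightarrow> 'a mpoly \<Rightarrow> 'a fps" where
  "seval r0 \<sigma> \<tau> p = peval fps_const (sassign r0 \<sigma> \<tau>) p"

definition eval0 :: "(nat \<Rightarrow> 'a::comm_ring_1) \<Rightarrow> 'a mpoly \<Rightarrow> 'a" where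
  "eval0 r0 p = peval id (\<lambda>v. case v of Vx \<Rightarrow> 0 | Vy0 i \<Rightarrow> r0 i | Vy i \<Rightarrow> r0 i
                                  | Vyd i \<Rightarrow> 0 | Vw \<Rightarrow> 0) p"

definition yvar :: "nat \<Rightarrow> var" where
  "yvar i = (if i = 0 then Vx else Vy i)"

definition dvar :: "nat \<Rightarrow> 'a::comm_ring_1 mpoly" where
  "dvar i = (if i = 0 then 1 else PVar (Vyd i))"

definition y0var :: "nat \<Rightarrow> 'a::comm_ring_1 mpoly" where
  "y0var i = (if i = 0 then 0 else PVar (Vy0 i))"

text \<open>Derivative of a monomial in x, y_1..y_n given as the ascending list of the indices
of its variables (with multiplicity): the head is the least variable, so
(y_i m)' = y_i' m + y_0i (m)'.\<close>
fun dlist :: "nat list \<Rightarrow> 'a::comm_ring_1 mpoly" where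
  "dlist [] = 0"
| "dlist (i # is) = dvar i * prod_list (map (\<lambda>j. PVar (yvar j)) is) + y0var i * dlist is"

definition mon_idx :: "nat \<Rightarrow> (var \<Rightarrow>\<^sub>0 nat) \<Rightarrow> nat list" where
  "mon_idx n m = concat (map (\<lambda>i. replicate (Poly_Mapping.lookup m (yvar i)) i) [0..<n+1])"

text \<open>Linear extension, the y_{0i} being treated as coefficients.\<close>
definition pderiv_s :: "nat \<Rightarrow> 'a::comm_ring_1 mpoly \<Rightarrow> 'a mpoly" where
  "pderiv_s n p = (\<Sum>m\<in>Poly_Mapping.keys p. PConst (Poly_Mapping.lookup p m)
       * (\<Prod>i\<in>{1..n}. PVar (Vy0 i) ^ Poly_Mapping.lookup m (Vy0 i)) * dlist (mon_idx n m))"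

definition subst_d :: "(nat \<Rightarrow> 'a::comm_ring_1 mpoly) \<Rightarrow> 'a mpoly \<Rightarrow> 'a mpoly" where
  "subst_d f p = peval PConst (\<lambda>v. case v of Vyd i \<Rightarrow> f i * PVar Vw | _ \<Rightarrow> PVar v) p"

end

theory Submission
  imports Defs
begin

(* Write G = g(X, r0, sigma). Along any sigma with sigma_i' = f_i(X, r0, sigma) * tau and
   sigma_i(0) = r0_i, the polynomial h evaluates to G': the defining recursion
   (y_i m)' = y_i' m + y_0i (m)' of the syntactic derivative is the product rule
   (a * b)' = a' * b + a(0) b' for streams, read with y_0i = sigma_i(0). Hence tau = G^-1 satisfies
   tau' = - G(0)^-1 G' tau with tau(0) = G(0)^-1; conversely this equation gives (G tau)' = 0 and
   (G tau)(0) = 1, so tau = G^-1. Both systems therefore have the same solutions. Uniqueness for the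
   rational system holds coefficientwise: coefficient k+1 of sigma_i is coefficient k of sigma_i',
   which depends only on the coefficients 0..k of sigma. *)

unbundle fps_syntax

section \<open>Evaluation of polynomials\<close>

definition monom_eval :: "(var \<Rightarrow> 'b::comm_ring_1) \<Rightarrow> (var \<Rightarrow>\<^sub>0 nat) \<Rightarrow> 'b" where
  "monom_eval \<rho> m = (\<Prod>v\<in>Poly_Mapping.keys m. \<rho> v ^ Poly_Mapping.lookup m v)"

lemma monom_eval_superset:
  assumes "finite S" "Poly_Mapping.keys m \<subseteq> S"
  shows "monom_eval \<rho> m = (\<Prod>v\<in>S. \<rho> v ^ Poly_Mapping.lookup m v)"
  unfolding monom_eval_def
  by (rule prod.mono_neutral_left) (use assms in \<open>auto simp: in_keys_iff\<close>)

lemma monom_eval_0 [simp]: "monom_eval \<rho> 0 = 1"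
  by (simp add: monom_eval_def)

lemma monom_eval_single: "monom_eval \<rho> (Poly_Mapping.single v k) = \<rho> v ^ k"
  by (simp add: monom_eval_def)

lemma monom_eval_add: "monom_eval \<rho> (a + b) = monom_eval \<rho> a * monom_eval \<rho> b"
proof -
  let ?S = "Poly_Mapping.keys a \<union> Poly_Mapping.keys b"
  have S: "finite ?S" by simp
  have "monom_eval \<rho> (a + b) = (\<Prod>v\<in>?S. \<rho> v ^ Poly_Mapping.lookup (a + b) v)"
    by (rule monom_eval_superset) (simp_all add: keys_add)
  also have "\<dots> = (\<Prod>v\<in>?S. \<rho> v ^ Poly_Mapping.lookup a v) * (\<Prod>v\<in>?S. \<rho> v ^ Poly_Mapping.lookup b v)"
    by (simp add: lookup_add power_add prod.distrib)
  also have "\<dots> = monom_eval \<rho> a * monom_eval \<rho> b"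
    by (simp add: monom_eval_superset[OF S])
  finally show ?thesis .
qed

lemma peval_eq_sum_monom_eval:
  "peval c \<rho> p = (\<Sum>m\<in>Poly_Mapping.keys p. c (Poly_Mapping.lookup p m) * monom_eval \<rho> m)"
  by (simp add: peval_def monom_eval_def)

lemma peval_0 [simp]: "peval c \<rho> 0 = 0"
  by (simp add: peval_def)

lemma peval_cong:
  assumes "\<And>v. v \<in> pvars p \<Longrightarrow> \<rho>1 v = \<rho>2 v"
  shows "peval c \<rho>1 p = peval c \<rho>2 p"
proof -
  have "\<rho>1 v = \<rho>2 v" if "m \<in> Poly_Mapping.keys p" "v \<in> Poly_Mapping.keys m" for m v
    using assms that unfolding pvars_def by blast
  then show ?thesis
    unfolding peval_def by (intro sum.cong arg_cong[where f="\<lambda>x. _ * x"] prod.cong) simp_all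
qed

lemma sum_single_lookup:
  "(\<Sum>m\<in>Poly_Mapping.keys p. Poly_Mapping.single m (Poly_Mapping.lookup p m)) = p"
  by (rule poly_mapping_eqI) (simp add: lookup_sum lookup_single when_def sum.delta in_keys_iff)

locale comm_ring_hom =
  fixes c :: "'a::comm_ring_1 \<Rightarrow> 'b::comm_ring_1"
  assumes hom_add: "c (a + b) = c a + c b"
    and hom_mult: "c (a * b) = c a * c b"
    and hom_1: "c 1 = 1"
begin

lemma hom_0: "c 0 = 0"
  using hom_add[of 0 0] by simp

lemma hom_sum: "c (sum f A) = (\<Sum>x\<in>A. c (f x))"
  by (induction A rule: infinite_finite_induct) (simp_all add: hom_0 hom_add)

lemma hom_prod: "c (prod f A) = (\<Prod>x\<in>A. c (f x))"
  by (induction A rule: infinite_finite_induct) (simp_all add: hom_1 hom_mult)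

lemma hom_power: "c (a ^ k) = c a ^ k"
  by (induction k) (simp_all add: hom_1 hom_mult)

lemma peval_superset:
  assumes "finite S" "Poly_Mapping.keys p \<subseteq> S"
  shows "peval c \<rho> p = (\<Sum>m\<in>S. c (Poly_Mapping.lookup p m) * monom_eval \<rho> m)"
  unfolding peval_eq_sum_monom_eval
  by (rule sum.mono_neutral_left) (use assms in \<open>auto simp: in_keys_iff hom_0\<close>)

lemma peval_add: "peval c \<rho> (p + q) = peval c \<rho> p + peval c \<rho> q"
proof -
  let ?S = "Poly_Mapping.keys p \<union> Poly_Mapping.keys q"
  have S: "finite ?S" by simp
  have "peval c \<rho> (p + q) = (\<Sum>m\<in>?S. c (Poly_Mapping.lookup (p + q) m) * monom_eval \<rho> m)"
    by (rule peval_superset) (simp_all add: keys_add)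
  also have "\<dots> = peval c \<rho> p + peval c \<rho> q"
    by (simp add: peval_superset[OF S] lookup_add hom_add distrib_right sum.distrib)
  finally show ?thesis .
qed

lemma peval_sum: "peval c \<rho> (sum f A) = (\<Sum>x\<in>A. peval c \<rho> (f x))"
  by (induction A rule: infinite_finite_induct) (simp_all add: peval_add)

lemma peval_single: "peval c \<rho> (Poly_Mapping.single m a) = c a * monom_eval \<rho> m"
  using peval_superset[of "{m}"] by (simp add: lookup_single)

lemma peval_mult: "peval c \<rho> (p * q) = peval c \<rho> p * peval c \<rho> q"
proof -
  have "p * q = (\<Sum>a\<in>Poly_Mapping.keys p. \<Sum>b\<in>Poly_Mapping.keys q.
      Poly_Mapping.single a (Poly_Mapping.lookup p a) * Poly_Mapping.single b (Poly_Mapping.lookup q b))"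
    by (subst (1) sum_single_lookup[symmetric, of p], subst (1) sum_single_lookup[symmetric, of q])
       (rule sum_product)
  then have "peval c \<rho> (p * q) = (\<Sum>a\<in>Poly_Mapping.keys p. \<Sum>b\<in>Poly_Mapping.keys q.
      (c (Poly_Mapping.lookup p a) * monom_eval \<rho> a) * (c (Poly_Mapping.lookup q b) * monom_eval \<rho> b))"
    by (simp add: peval_sum peval_single mult_single hom_mult monom_eval_add ac_simps)
  also have "\<dots> = peval c \<rho> p * peval c \<rho> q"
    unfolding peval_eq_sum_monom_eval by (rule sum_product[symmetric])
  finally show ?thesis .
qed

lemma peval_1: "peval c \<rho> 1 = 1"
  using peval_single[where m=0 and a=1] by (simp add: hom_1)

lemma peval_prod: "peval c \<rho> (prod f A) = (\<Prod>x\<in>A. peval c \<rho> (f x))"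
  by (induction A rule: infinite_finite_induct) (simp_all add: peval_mult peval_1)

lemma peval_power: "peval c \<rho> (p ^ k) = peval c \<rho> p ^ k"
  by (induction k) (simp_all add: peval_mult peval_1)

lemma peval_prod_list: "peval c \<rho> (prod_list (map f xs)) = prod_list (map (\<lambda>x. peval c \<rho> (f x)) xs)"
  by (induction xs) (simp_all add: peval_mult peval_1)

lemma peval_PVar: "peval c \<rho> (PVar v) = \<rho> v"
  by (simp add: PVar_def peval_single hom_1 monom_eval_single)

lemma peval_PConst: "peval c \<rho> (PConst a) = c a"
  by (simp add: PConst_def peval_single)

lemma peval_peval_PConst: "peval c \<rho> (peval PConst \<theta> p) = peval c (\<lambda>v. peval c \<rho> (\<theta> v)) p"
  by (simp add: peval_def[of PConst] peval_def[of c "\<lambda>v. peval c \<rho> (\<theta> v)"]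
      peval_sum peval_mult peval_prod peval_power peval_PConst)

lemma hom_peval: "c (peval d \<rho> p) = peval (c \<circ> d) (c \<circ> \<rho>) p"
  by (simp add: peval_def hom_sum hom_mult hom_prod hom_power)

end

interpretation fps_const: comm_ring_hom "fps_const :: 'a::comm_ring_1 \<Rightarrow> 'a fps"
  by unfold_locales simp_all

interpretation fps_nth_0: comm_ring_hom "\<lambda>s :: 'a::comm_ring_1 fps. s $ 0"
  by unfold_locales simp_all

section \<open>The stream derivative\<close>

lemma sderiv_nth [simp]: "sderiv s $ i = s $ Suc i"
  by (simp add: sderiv_def)

lemma fps_eq_const_plus_X_sderiv: "(s :: 'a::comm_ring_1 fps) = fps_const (s $ 0) + fps_X * sderiv s"
proof (rule fps_ext)
  show "s $ n = (fps_const (s $ 0) + fps_X * sderiv s) $ n" for n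
    by (cases n) simp_all
qed

lemma sderiv_eq_0_imp_const: "sderiv (s :: 'a::comm_ring_1 fps) = 0 \<Longrightarrow> s = fps_const (s $ 0)"
  using fps_eq_const_plus_X_sderiv[of s] by simp

lemma sderiv_const_mult: "sderiv (fps_const c * s) = fps_const (c :: 'a::comm_ring_1) * sderiv s"
  by (rule fps_ext) simp

lemma sderiv_sum: "sderiv (sum f A :: 'a::comm_ring_1 fps) = (\<Sum>x\<in>A. sderiv (f x))"
  by (rule fps_ext) (simp add: fps_sum_nth)

lemma sderiv_1 [simp]: "sderiv (1 :: 'a::comm_ring_1 fps) = 0"
  by (rule fps_ext) simp

lemma sderiv_X [simp]: "sderiv (fps_X :: 'a::comm_ring_1 fps) = 1"
  by (rule fps_ext) simp

lemma sderiv_mult: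
  "sderiv (a * b) = sderiv a * b + fps_const (a $ 0) * sderiv (b :: 'a::comm_ring_1 fps)"
  by (rule fps_ext) (simp only: sderiv_nth fps_mult_nth[of a b] sum.atLeast0_atMost_Suc_shift,
      simp add: fps_mult_nth[of "sderiv a" b])

lemma eq_inverse_iff_sderiv:
  fixes G \<tau> :: "'a::field fps"
  assumes G0: "G $ 0 \<noteq> 0"
  shows "\<tau> = inverse G \<longleftrightarrow>
    sderiv \<tau> = - fps_const (inverse (G $ 0)) * sderiv G * \<tau> \<and> \<tau> $ 0 = inverse (G $ 0)"
proof
  assume \<tau>: "\<tau> = inverse G"
  have "0 = sderiv (G * \<tau>)"
    using \<tau> G0 by (simp add: inverse_mult_eq_1')
  also have "\<dots> = sderiv G * \<tau> + fps_const (G $ 0) * sderiv \<tau>"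
    by (rule sderiv_mult)
  finally have "fps_const (G $ 0) * sderiv \<tau> = - (sderiv G * \<tau>)"
    by (simp add: eq_neg_iff_add_eq_0 add.commute)
  moreover have "sderiv \<tau> = fps_const (inverse (G $ 0)) * (fps_const (G $ 0) * sderiv \<tau>)"
    using G0 by (simp add: mult.assoc[symmetric])
  ultimately have "sderiv \<tau> = - fps_const (inverse (G $ 0)) * sderiv G * \<tau>"
    by (simp add: mult.assoc del: fps_const_neg)
  moreover have "\<tau> $ 0 = inverse (G $ 0)"
    using \<tau> G0 by simp
  ultimately show "sderiv \<tau> = - fps_const (inverse (G $ 0)) * sderiv G * \<tau> \<and> \<tau> $ 0 = inverse (G $ 0)"
    by blast
next
  assume \<tau>: "sderiv \<tau> = - fps_const (inverse (G $ 0)) * sderiv G * \<tau> \<and> \<tau> $ 0 = inverse (G $ 0)"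
  have "sderiv (G * \<tau>) = sderiv G * \<tau> + fps_const (G $ 0) * sderiv \<tau>"
    by (rule sderiv_mult)
  also have "\<dots> = 0"
    using \<tau> G0 by (simp add: mult.assoc[symmetric] del: fps_const_neg)
  finally have "sderiv (G * \<tau>) = 0" .
  moreover have "(G * \<tau>) $ 0 = 1"
    using \<tau> G0 by simp
  ultimately have "G * \<tau> = 1"
    using sderiv_eq_0_imp_const by fastforce
  then show "\<tau> = inverse G"
    using G0 by (metis inverse_mult_eq_1 mult.assoc mult.left_neutral mult.right_neutral)
qed

definition fps_agree :: "nat \<Rightarrow> 'a fps \<Rightarrow> 'a fps \<Rightarrow> bool" where
  "fps_agree k a b \<longleftrightarrow> (\<forall>j\<le>k. a $ j = b $ j)"

lemma fps_agree_refl [simp]: "fps_agree k a a"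
  by (simp add: fps_agree_def)

lemma fps_agree_add: "fps_agree k a b \<Longrightarrow> fps_agree k c d \<Longrightarrow> fps_agree k (a + c) (b + d)"
  by (simp add: fps_agree_def)

lemma fps_agree_mult:
  "fps_agree k a b \<Longrightarrow> fps_agree k c d \<Longrightarrow> fps_agree k (a * c) (b * (d :: 'a::comm_ring_1 fps))"
  unfolding fps_agree_def fps_mult_nth by (auto intro!: sum.cong)

lemma fps_agree_sum:
  "(\<And>x. x \<in> A \<Longrightarrow> fps_agree k (f x) (g x)) \<Longrightarrow> fps_agree k (sum f A) (sum g A)"
  by (induction A rule: infinite_finite_induct) (auto intro: fps_agree_add)

lemma fps_agree_prod:
  "(\<And>x. x \<in> A \<Longrightarrow> fps_agree k (f x) (g x)) \<Longrightarrow> fps_agree k (prod f A) (prod g A :: 'a::comm_ring_1 fps)"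
  by (induction A rule: infinite_finite_induct) (auto intro: fps_agree_mult)

lemma fps_agree_power: "fps_agree k a b \<Longrightarrow> fps_agree k (a ^ m) (b ^ m :: 'a::comm_ring_1 fps)"
  by (induction m) (auto intro: fps_agree_mult)

lemma fps_agree_inverse:
  fixes a b :: "'a::field fps"
  assumes ab: "fps_agree k a b" and a0: "a $ 0 \<noteq> 0"
  shows "fps_agree k (inverse a) (inverse b)"
proof -
  have b0: "b $ 0 \<noteq> 0"
    using ab a0 by (simp add: fps_agree_def)
  have "inverse a = inverse b + inverse a * inverse b * (b - a)"
    using a0 b0 by (simp add: algebra_simps inverse_mult_eq_1 inverse_mult_eq_1')
  moreover have "fps_agree k (inverse b + inverse a * inverse b * (b - a)) (inverse b + inverse a * inverse b * 0)"
    using ab by (intro fps_agree_add fps_agree_mult) (simp_all add: fps_agree_def)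
  ultimately show ?thesis
    by simp
qed

lemma fps_agree_Suc: "fps_agree (Suc k) a b \<longleftrightarrow> a $ 0 = b $ 0 \<and> fps_agree k (sderiv a) (sderiv b)"
proof -
  have "(\<forall>j\<le>Suc k. P j) \<longleftrightarrow> P 0 \<and> (\<forall>j\<le>k. P (Suc j))" for P :: "nat \<Rightarrow> bool"
    by (metis Suc_le_mono not0_implies_Suc zero_le)
  then show ?thesis
    by (simp add: fps_agree_def)
qed

lemma fps_eqI_agree: "(\<And>k. fps_agree k a b) \<Longrightarrow> a = b"
  by (rule fps_ext) (auto simp: fps_agree_def)

lemma fps_agree_peval:
  assumes "\<And>v. v \<in> pvars p \<Longrightarrow> fps_agree k (\<rho>1 v) (\<rho>2 v)"
  shows "fps_agree k (peval fps_const \<rho>1 p) (peval fps_const \<rho>2 p)"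
proof -
  have "fps_agree k (\<rho>1 v) (\<rho>2 v)" if "m \<in> Poly_Mapping.keys p" "v \<in> Poly_Mapping.keys m" for m v
    using assms that unfolding pvars_def by blast
  then show ?thesis
    unfolding peval_def by (intro fps_agree_sum fps_agree_mult fps_agree_prod fps_agree_power) simp_all
qed

section \<open>Evaluation at streams and the syntactic derivative\<close>

lemma sassign_base_vars_indep: "v \<in> base_vars n \<Longrightarrow> sassign r0 \<sigma> \<tau> v = sassign r0 \<sigma> \<tau>' v"
  by (auto simp: base_vars_def sassign_def)

lemma seval_base_vars_indep: "pvars p \<subseteq> base_vars n \<Longrightarrow> seval r0 \<sigma> \<tau> p = seval r0 \<sigma> \<tau>' p"
  unfolding seval_def by (rule peval_cong) (auto intro: sassign_base_vars_indep)

lemma seval_cong_base_vars: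
  assumes "pvars p \<subseteq> base_vars n" "\<forall>i\<in>{1..n}. \<sigma>2 i = \<sigma> i"
  shows "seval r0 \<sigma>2 \<tau> p = seval r0 \<sigma> \<tau> p"
  unfolding seval_def by (rule peval_cong) (use assms in \<open>auto simp: base_vars_def sassign_def\<close>)

lemma seval_nth_0:
  fixes r0 :: "nat \<Rightarrow> 'a::comm_ring_1"
  assumes "pvars p \<subseteq> base_vars n" "\<forall>i\<in>{1..n}. \<sigma> i $ 0 = r0 i"
  shows "seval r0 \<sigma> \<tau> p $ 0 = eval0 r0 p"
proof -
  have nth_0_const: "(\<lambda>s. s $ 0) \<circ> fps_const = (id :: 'a \<Rightarrow> 'a)"
    by auto
  show ?thesis
    unfolding seval_def fps_nth_0.hom_peval eval0_def nth_0_const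
    by (intro peval_cong) (use assms in \<open>auto simp: base_vars_def sassign_def\<close>)
qed

lemma fps_agree_seval:
  assumes "pvars p \<subseteq> base_vars n" "\<forall>i\<in>{1..n}. fps_agree k (\<sigma>2 i) (\<sigma> i)"
  shows "fps_agree k (seval r0 \<sigma>2 \<tau> p) (seval r0 \<sigma> \<tau> p)"
  unfolding seval_def
  by (rule fps_agree_peval) (use assms in \<open>auto simp: base_vars_def sassign_def\<close>)

lemma base_vars_eq: "base_vars n = Vy0 ` {1..n} \<union> yvar ` {0..n}"
  by (auto simp: base_vars_def yvar_def image_iff)

lemma prod_list_mon_idx:
  fixes \<rho> :: "var \<Rightarrow> 'a::comm_monoid_mult"
  shows "prod_list (map (\<lambda>j. \<rho> (yvar j)) (mon_idx n m)) = (\<Prod>i\<in>{0..n}. \<rho> (yvar i) ^ Poly_Mapping.lookup m (yvar i))"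
proof -
  have "prod_list (map h (concat xss)) = prod_list (map (\<lambda>xs. prod_list (map h xs)) xss)" for h :: "nat \<Rightarrow> 'a" and xss
    by (induction xss) simp_all
  then show ?thesis
    unfolding mon_idx_def
    by (simp add: prod.distinct_set_conv_list[symmetric] atLeastLessThanSuc_atLeastAtMost del: upt_Suc)
qed

lemma monom_eval_eq_mon_idx:
  assumes "Poly_Mapping.keys m \<subseteq> base_vars n"
  shows "monom_eval \<rho> m = (\<Prod>i\<in>{1..n}. \<rho> (Vy0 i) ^ Poly_Mapping.lookup m (Vy0 i))
    * prod_list (map (\<lambda>j. \<rho> (yvar j)) (mon_idx n m))"
proof -
  have "inj yvar" "inj Vy0" "Vy0 ` {1..n} \<inter> yvar ` {0..n} = {}"
    by (auto simp: inj_def yvar_def split: if_splits)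
  moreover have "monom_eval \<rho> m = (\<Prod>v\<in>Vy0 ` {1..n} \<union> yvar ` {0..n}. \<rho> v ^ Poly_Mapping.lookup m v)"
    by (rule monom_eval_superset) (use assms in \<open>simp_all add: base_vars_eq\<close>)
  ultimately show ?thesis
    unfolding prod_list_mon_idx by (simp add: prod.union_disjoint prod.reindex inj_on_subset)
qed

definition dassign :: "(nat \<Rightarrow> 'a::comm_ring_1) \<Rightarrow> (nat \<Rightarrow> 'a fps) \<Rightarrow> 'a fps \<Rightarrow> (nat \<Rightarrow> 'a fps) \<Rightarrow> var \<Rightarrow> 'a fps"
  where "dassign r0 \<sigma> \<tau> d v = (case v of Vyd i \<Rightarrow> d i | _ \<Rightarrow> sassign r0 \<sigma> \<tau> v)"

lemma dassign_yvar [simp]: "dassign r0 \<sigma> \<tau> d (yvar j) = sassign r0 \<sigma> \<tau> (yvar j)"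
  by (simp add: dassign_def yvar_def)

lemma dassign_Vy0 [simp]: "dassign r0 \<sigma> \<tau> d (Vy0 i) = fps_const (r0 i)"
  by (simp add: dassign_def sassign_def)

lemma sderiv_prod_list_yvar:
  assumes "set js \<subseteq> {0..n}"
    and init: "\<forall>i\<in>{1..n}. \<sigma> i $ 0 = r0 i" and deriv: "\<forall>i\<in>{1..n}. sderiv (\<sigma> i) = d i"
  shows "sderiv (prod_list (map (\<lambda>j. sassign r0 \<sigma> \<tau> (yvar j)) js)) = peval fps_const (dassign r0 \<sigma> \<tau> d) (dlist js)"
  using assms(1)
proof (induction js)
  case Nil
  show ?case by simp
next
  case (Cons i js)
  let ?\<rho> = "dassign r0 \<sigma> \<tau> d" and ?P = "prod_list (map (\<lambda>j. sassign r0 \<sigma> \<tau> (yvar j)) js)"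
  have "peval fps_const ?\<rho> (dvar i) = sderiv (sassign r0 \<sigma> \<tau> (yvar i))"
    and "peval fps_const ?\<rho> (y0var i) = fps_const (sassign r0 \<sigma> \<tau> (yvar i) $ 0)"
    using Cons.prems init deriv
    by (auto simp: dvar_def y0var_def yvar_def fps_const.peval_1 fps_const.peval_PVar dassign_def sassign_def)
  moreover have "peval fps_const ?\<rho> (prod_list (map (\<lambda>j. PVar (yvar j)) js)) = ?P"
    by (simp add: fps_const.peval_prod_list fps_const.peval_PVar)
  ultimately show ?case
    using Cons by (simp add: fps_const.peval_add fps_const.peval_mult sderiv_mult)
qed

lemma sderiv_seval:
  assumes g_vars: "pvars g \<subseteq> base_vars n"
    and init: "\<forall>i\<in>{1..n}. \<sigma> i $ 0 = r0 i" and deriv: "\<forall>i\<in>{1..n}. sderiv (\<sigma> i) = d i"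
  shows "sderiv (seval r0 \<sigma> \<tau> g) = peval fps_const (dassign r0 \<sigma> \<tau> d) (pderiv_s n g)"
proof -
  let ?\<rho> = "sassign r0 \<sigma> \<tau>" and ?\<rho>' = "dassign r0 \<sigma> \<tau> d"
  let ?P = "\<lambda>m. prod_list (map (\<lambda>j. ?\<rho> (yvar j)) (mon_idx n m))"
  have monomial: "sderiv (fps_const (Poly_Mapping.lookup g m) * monom_eval ?\<rho> m)
      = peval fps_const ?\<rho>' (PConst (Poly_Mapping.lookup g m)
          * (\<Prod>i\<in>{1..n}. PVar (Vy0 i) ^ Poly_Mapping.lookup m (Vy0 i)) * dlist (mon_idx n m))"
    if m: "m \<in> Poly_Mapping.keys g" for m
  proof -
    have "Poly_Mapping.keys m \<subseteq> base_vars n"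
      using m g_vars by (auto simp: pvars_def)
    then have "monom_eval ?\<rho> m = fps_const (\<Prod>i\<in>{1..n}. r0 i ^ Poly_Mapping.lookup m (Vy0 i)) * ?P m"
      by (simp add: monom_eval_eq_mon_idx sassign_def fps_const.hom_prod)
    then have "sderiv (fps_const (Poly_Mapping.lookup g m) * monom_eval ?\<rho> m)
        = fps_const (Poly_Mapping.lookup g m) * fps_const (\<Prod>i\<in>{1..n}. r0 i ^ Poly_Mapping.lookup m (Vy0 i))
          * sderiv (?P m)"
      by (simp add: sderiv_const_mult mult.assoc[symmetric])
    also have "sderiv (?P m) = peval fps_const ?\<rho>' (dlist (mon_idx n m))"
      by (rule sderiv_prod_list_yvar[OF _ init deriv]) (auto simp: mon_idx_def)
    finally show ?thesis
      by (simp add: fps_const.peval_mult fps_const.peval_PConst fps_const.peval_prod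
          fps_const.peval_power fps_const.peval_PVar fps_const.hom_prod)
  qed
  have "sderiv (seval r0 \<sigma> \<tau> g) = (\<Sum>m\<in>Poly_Mapping.keys g. sderiv (fps_const (Poly_Mapping.lookup g m) * monom_eval ?\<rho> m))"
    unfolding seval_def peval_eq_sum_monom_eval sderiv_sum ..
  also have "\<dots> = peval fps_const ?\<rho>' (pderiv_s n g)"
    unfolding pderiv_s_def fps_const.peval_sum using monomial by (rule sum.cong[OF refl])
  finally show ?thesis .
qed

lemma seval_subst_d:
  "seval r0 \<sigma> \<tau> (subst_d f q) = peval fps_const (dassign r0 \<sigma> \<tau> (\<lambda>i. seval r0 \<sigma> \<tau> (f i) * \<tau>)) q"
  unfolding subst_d_def seval_def fps_const.peval_peval_PConst
  by (rule arg_cong[where f="\<lambda>\<rho>. peval fps_const \<rho> q"])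
     (auto simp: fun_eq_iff fps_const.peval_mult fps_const.peval_PVar dassign_def sassign_def
       split: var.split)

lemma sderiv_seval_eq_seval_subst_d:
  assumes "pvars g \<subseteq> base_vars n" "\<forall>i\<in>{1..n}. \<sigma> i $ 0 = r0 i"
    and "\<forall>i\<in>{1..n}. sderiv (\<sigma> i) = seval r0 \<sigma> \<tau> (f i) * \<tau>"
  shows "sderiv (seval r0 \<sigma> \<tau> g) = seval r0 \<sigma> \<tau> (subst_d f (pderiv_s n g))"
  unfolding seval_subst_d by (rule sderiv_seval[OF assms])

lemma eq_inverse_seval_iff:
  fixes g :: "'a::field mpoly"
  assumes g_vars: "pvars g \<subseteq> base_vars n" and g0: "eval0 r0 g \<noteq> 0"
    and init: "\<forall>i\<in>{1..n}. \<sigma> i $ 0 = r0 i"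
    and deriv: "\<forall>i\<in>{1..n}. sderiv (\<sigma> i) = seval r0 \<sigma> \<tau> (f i) * \<tau>"
  shows "\<tau> = inverse (seval r0 \<sigma> \<tau> g) \<longleftrightarrow>
    sderiv \<tau> = - fps_const (inverse (eval0 r0 g)) * seval r0 \<sigma> \<tau> (subst_d f (pderiv_s n g)) * \<tau>
    \<and> \<tau> $ 0 = inverse (eval0 r0 g)"
  using eq_inverse_iff_sderiv[of "seval r0 \<sigma> \<tau> g" \<tau>] g0
  by (simp add: seval_nth_0[OF g_vars init] sderiv_seval_eq_seval_subst_d[OF g_vars init deriv])

section \<open>The rational and the polynomial system\<close>

definition rational_system_sol ::
    "nat \<Rightarrow> (nat \<Rightarrow> 'a::field mpoly) \<Rightarrow> 'a mpoly \<Rightarrow> (nat \<Rightarrow> 'a) \<Rightarrow> (nat \<Rightarrow> 'a fps) \<Rightarrow> bool" where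
  "rational_system_sol n f g r0 \<sigma> \<longleftrightarrow>
    (\<forall>i\<in>{1..n}. sderiv (\<sigma> i) = seval r0 \<sigma> 0 (f i) * inverse (seval r0 \<sigma> 0 g) \<and> \<sigma> i $ 0 = r0 i)"

definition polynomial_system_sol ::
    "nat \<Rightarrow> (nat \<Rightarrow> 'a::field mpoly) \<Rightarrow> 'a mpoly \<Rightarrow> (nat \<Rightarrow> 'a) \<Rightarrow> (nat \<Rightarrow> 'a fps) \<Rightarrow> 'a fps \<Rightarrow> bool" where
  "polynomial_system_sol n f g r0 \<sigma> \<tau> \<longleftrightarrow>
    (\<forall>i\<in>{1..n}. sderiv (\<sigma> i) = seval r0 \<sigma> \<tau> (f i) * \<tau> \<and> \<sigma> i $ 0 = r0 i)
    \<and> sderiv \<tau> = - fps_const (inverse (eval0 r0 g)) * seval r0 \<sigma> \<tau> (subst_d f (pderiv_s n g)) * \<tau>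
    \<and> \<tau> $ 0 = inverse (eval0 r0 g)"

lemma polynomial_system_sol_iff:
  assumes f_vars: "\<forall>i\<in>{1..n}. pvars (f i) \<subseteq> base_vars n"
    and g_vars: "pvars g \<subseteq> base_vars n" and g0: "eval0 r0 g \<noteq> 0"
  shows "polynomial_system_sol n f g r0 \<sigma> \<tau> \<longleftrightarrow>
    rational_system_sol n f g r0 \<sigma> \<and> \<tau> = inverse (seval r0 \<sigma> 0 g)"
proof -
  have f_indep: "\<forall>i\<in>{1..n}. seval r0 \<sigma> \<tau> (f i) = seval r0 \<sigma> 0 (f i)"
    using f_vars by (blast intro: seval_base_vars_indep)
  have g_indep: "seval r0 \<sigma> \<tau> g = seval r0 \<sigma> 0 g"
    using g_vars by (rule seval_base_vars_indep)
  show ?thesis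
  proof
    assume sol: "polynomial_system_sol n f g r0 \<sigma> \<tau>"
    then have "\<tau> = inverse (seval r0 \<sigma> 0 g)"
      using eq_inverse_seval_iff[OF g_vars g0, of \<sigma> \<tau> f] g_indep
      unfolding polynomial_system_sol_def by auto
    with sol f_indep show "rational_system_sol n f g r0 \<sigma> \<and> \<tau> = inverse (seval r0 \<sigma> 0 g)"
      unfolding polynomial_system_sol_def rational_system_sol_def by auto
  next
    assume "rational_system_sol n f g r0 \<sigma> \<and> \<tau> = inverse (seval r0 \<sigma> 0 g)"
    with f_indep g_indep eq_inverse_seval_iff[OF g_vars g0, of \<sigma> \<tau> f]
    show "polynomial_system_sol n f g r0 \<sigma> \<tau>"
      unfolding polynomial_system_sol_def rational_system_sol_def by auto
  qed
qed

lemma rational_system_sol_unique: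
  assumes f_vars: "\<forall>i\<in>{1..n}. pvars (f i) \<subseteq> base_vars n"
    and g_vars: "pvars g \<subseteq> base_vars n" and g0: "eval0 r0 g \<noteq> 0"
    and \<sigma>: "rational_system_sol n f g r0 \<sigma>" and \<sigma>2: "rational_system_sol n f g r0 \<sigma>2"
  shows "\<forall>i\<in>{1..n}. \<sigma>2 i = \<sigma> i"
proof -
  have init2: "\<forall>i\<in>{1..n}. \<sigma>2 i $ 0 = r0 i"
    using \<sigma>2 by (simp add: rational_system_sol_def)
  have "\<forall>i\<in>{1..n}. fps_agree k (\<sigma>2 i) (\<sigma> i)" for k
  proof (induction k)
    case 0
    show ?case
      using \<sigma> \<sigma>2 by (simp add: rational_system_sol_def fps_agree_def)
  next
    case (Suc k)
    have agree: "fps_agree k (seval r0 \<sigma>2 0 p) (seval r0 \<sigma> 0 p)" if "pvars p \<subseteq> base_vars n" for p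
      using that Suc.IH by (rule fps_agree_seval)
    have "seval r0 \<sigma>2 0 g $ 0 \<noteq> 0"
      using seval_nth_0[OF g_vars init2] g0 by simp
    then show ?case
      using \<sigma> \<sigma>2 f_vars g_vars
      by (auto simp: rational_system_sol_def fps_agree_Suc intro!: fps_agree_mult fps_agree_inverse agree)
  qed
  then show ?thesis
    by (auto intro: fps_eqI_agree)
qed

theorem lemma3p3:
  fixes n :: nat and f :: "nat \<Rightarrow> 'a::field_char_0 mpoly" and g :: "'a mpoly"
    and r0 :: "nat \<Rightarrow> 'a" and \<sigma> :: "nat \<Rightarrow> 'a fps"
  assumes f_vars: "\<forall>i\<in>{1..n}. pvars (f i) \<subseteq> base_vars n"
    and g_vars: "pvars g \<subseteq> base_vars n"
    and g0: "eval0 r0 g \<noteq> 0"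
  defines "h \<equiv> subst_d f (pderiv_s n g)"
  shows "((\<forall>i\<in>{1..n}. sderiv (\<sigma> i) = seval r0 \<sigma> 0 (f i) * inverse (seval r0 \<sigma> 0 g)
                      \<and> fps_nth (\<sigma> i) 0 = r0 i)
          \<longrightarrow> (let \<tau> = inverse (seval r0 \<sigma> 0 g);
                   ivp = (\<lambda>\<sigma>2 \<tau>2.
                     (\<forall>i\<in>{1..n}. sderiv (\<sigma>2 i) = seval r0 \<sigma>2 \<tau>2 (f i) * \<tau>2 \<and> fps_nth (\<sigma>2 i) 0 = r0 i)
                     \<and> sderiv \<tau>2 = - fps_const (inverse (eval0 r0 g)) * seval r0 \<sigma>2 \<tau>2 h * \<tau>2
                     \<and> fps_nth \<tau>2 0 = inverse (eval0 r0 g))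
               in ivp \<sigma> \<tau> \<and>
                  (\<forall>\<sigma>2 \<tau>2. ivp \<sigma>2 \<tau>2 \<longrightarrow> (\<forall>i\<in>{1..n}. \<sigma>2 i = \<sigma> i) \<and> \<tau>2 = \<tau>)))
       \<and> (\<forall>\<tau>. ((\<forall>i\<in>{1..n}. sderiv (\<sigma> i) = seval r0 \<sigma> \<tau> (f i) * \<tau> \<and> fps_nth (\<sigma> i) 0 = r0 i)
                 \<and> sderiv \<tau> = - fps_const (inverse (eval0 r0 g)) * seval r0 \<sigma> \<tau> h * \<tau>
                 \<and> fps_nth \<tau> 0 = inverse (eval0 r0 g))
             \<longrightarrow> (\<forall>i\<in>{1..n}. sderiv (\<sigma> i) = seval r0 \<sigma> 0 (f i) * inverse (seval r0 \<sigma> 0 g)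
                      \<and> fps_nth (\<sigma> i) 0 = r0 i))"
proof -
  have sol_iff: "polynomial_system_sol n f g r0 s t \<longleftrightarrow>
      rational_system_sol n f g r0 s \<and> t = inverse (seval r0 s 0 g)" for s t
    by (rule polynomial_system_sol_iff[OF f_vars g_vars g0])
  have unique: "(\<forall>i\<in>{1..n}. s i = \<sigma> i) \<and> seval r0 s 0 g = seval r0 \<sigma> 0 g"
    if "rational_system_sol n f g r0 \<sigma>" "rational_system_sol n f g r0 s" for s
    using rational_system_sol_unique[OF f_vars g_vars g0 that] seval_cong_base_vars[OF g_vars] by blast
  show ?thesis
    unfolding Let_def h_def rational_system_sol_def[symmetric] polynomial_system_sol_def[symmetric]
    using sol_iff unique by metis
qed

end
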